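(* Assume $b<0$ and $a>0$, and let $(J,E)\in D_1$, with $q\in(0,\sqrt{a/3})$ such that $J=q(q^2-a)/b$. Then $$\lim_{E\to E_+(J)}T(J,E)=+\infty,\quad \lim_{E\to E_+(J)}\tilde M(J,E)=+\infty,\quad \lim_{E\to E_+(J)}\frac{\tilde M(J,E)}{T(J,E)}=\frac{q^2-a}{2b},$$ $$\lim_{E\to E_+(J)}\tilde P(J,E)=+\infty,\quad \lim_{E\to E_+(J)}\frac{\tilde P(J,E)}{T(J,E)}=\frac{q(q^2-a)}{2b}.$$
   Context: Consider the ODE $u_{xx}+au+b|u|^2u=0$ with $b<0<a$, and the quantities $J=\operatorname{Im}(u\bar u_x)$, $E=\frac12|u_x|^2+\frac a2|u|^2+\frac b4|u|^4$. Let $V_J(r)=\frac{J^2}{2r^2}+a\frac{r^2}{2}+b\frac{r^4}{4}$. For $0<J<\sqrt{\frac{4a^3}{27b^2}}$ write $J=q(q^2-a)/b=Q(Q^2-a)/b$ with $0<q^2<a/3<Q^2<a$, $q,Q>0$; set $E_-(J)=\frac1{4b}(Q^2-a)(3Q^2+a)$ and $E_+(J)=\frac1{4b}(q^2-a)(3q^2+a)$ (local minimum and maximum values of $V_J$). Let $D_1=\{(J,E):0<J<\sqrt{\frac{4a^3}{27b^2}},\ E_-(J)<E<E_+(J)\}$. For $(J,E)\in D_1$, let $r_1<r_2<r_3$ be the positive roots of $E-V_J(r)$ and define $T(J,E)=2\int_{r_1}^{r_2}\frac{dr}{\sqrt{2(E-V_J(r))}}$, $\tilde M(J,E)=\int_{r_1}^{r_2}\frac{r^2\,dr}{\sqrt{2(E-V_J(r))}}$,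 and $\tilde P(J,E)=\frac12 J\,T(J,E)$. *)

theory Defs
  imports "HOL-Analysis.Analysis"
begin

definition VJ :: "real \<Rightarrow> real \<Rightarrow> real \<Rightarrow> real \<Rightarrow> real" where
  "VJ a b J r = J^2 / (2 * r^2) + a * r^2 / 2 + b * r^4 / 4"

definition small_q :: "real \<Rightarrow> real \<Rightarrow> real \<Rightarrow> real" where
  "small_q a b J = (THE q. 0 < q \<and> q^2 < a/3 \<and> J = q * (q^2 - a) / b)"

definition big_Q :: "real \<Rightarrow> real \<Rightarrow> real \<Rightarrow> real" where
  "big_Q a b J = (THE Q. 0 < Q \<and> a/3 < Q^2 \<and> Q^2 < a \<and> J = Q * (Q^2 - a) / b)"

definition Eminus :: "real \<Rightarrow> real \<Rightarrow> real \<Rightarrow> real" where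
  "Eminus a b J = (let Q = big_Q a b J in (Q^2 - a) * (3 * Q^2 + a) / (4 * b))"

definition Eplus :: "real \<Rightarrow> real \<Rightarrow> real \<Rightarrow> real" where
  "Eplus a b J = (let q = small_q a b J in (q^2 - a) * (3 * q^2 + a) / (4 * b))"

definition D1 :: "real \<Rightarrow> real \<Rightarrow> (real \<times> real) set" where
  "D1 a b = {(J, E). 0 < J \<and> J < sqrt (4 * a^3 / (27 * b^2)) \<and>
                     Eminus a b J < E \<and> E < Eplus a b J}"

definition roots :: "real \<Rightarrow> real \<Rightarrow> real \<Rightarrow> real \<Rightarrow> real list" where
  "roots a b J E = sorted_list_of_set {r. 0 < r \<and> E - VJ a b J r = 0}"

definition r1 :: "real \<Rightarrow> real \<Rightarrow> real \<Rightarrow> real \<Rightarrow> real" where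
  "r1 a b J E = roots a b J E ! 0"

definition r2 :: "real \<Rightarrow> real \<Rightarrow> real \<Rightarrow> real \<Rightarrow> real" where
  "r2 a b J E = roots a b J E ! 1"

definition T :: "real \<Rightarrow> real \<Rightarrow> real \<Rightarrow> real \<Rightarrow> real" where
  "T a b J E = 2 * integral {r1 a b J E .. r2 a b J E}
                  (\<lambda>r. 1 / sqrt (2 * (E - VJ a b J r)))"

definition Mt :: "real \<Rightarrow> real \<Rightarrow> real \<Rightarrow> real \<Rightarrow> real" where
  "Mt a b J E = integral {r1 a b J E .. r2 a b J E}
                  (\<lambda>r. r^2 / sqrt (2 * (E - VJ a b J r)))"

definition Pt :: "real \<Rightarrow> real \<Rightarrow> real \<Rightarrow> real \<Rightarrow> real" where
  "Pt a b J E = J * T a b J E / 2"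

end

theory Submission
  imports Defs
begin

(* With s = r^2 one has 2 (E - V_J r) = R(s) / (2 s) for the cubic R = radial_cubic a b J E, and for
   J = q (q^2 - a) / b it splits as R(s) = -b (s - smax)^2 (s - sthird) - 4 (E_+ - E) s, where
   smax = (q^2 - a) / b is r^2 at the local maximum of V_J.  So for E slightly below E_+ the roots of R
   are s1 < s2 < smax < s3 with (smax - s2)^2 = O(E_+ - E), the turning points are r1 = sqrt s1 and
   r2 = sqrt s2, and 2 (E - V_J r) = -b (r^2 - s1) (s2 - r^2) (s3 - r^2) / (2 r^2).  Near sqrt smax
   this is at most a constant times (sqrt smax - r)^2, so T grows like -ln (sqrt smax - r2).  The
   defect smax/2 T - Mt is the integral of (smax - r^2) / sqrt (2 (E - V_J r)): where r^2 is within
   eps of smax it contributes at most eps T, elsewhere the integrand is dominated by a multiple of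
   r / sqrt (r^2 - s1) uniformly in E.  Hence Mt / T tends to smax / 2, and Pt = J T / 2 does the
   rest. *)

definition radial_cubic :: "real \<Rightarrow> real \<Rightarrow> real \<Rightarrow> real \<Rightarrow> real \<Rightarrow> real" where
  "radial_cubic a b J E s = - b * s^3 - 2 * a * s^2 + 4 * E * s - 2 * J^2"

lemma VJ_eq_radial_cubic:
  "r \<noteq> 0 \<Longrightarrow> 2 * (E - VJ a b J r) = radial_cubic a b J E (r^2) / (2 * r^2)"
  by (simp add: VJ_def radial_cubic_def field_simps)

lemma cubic_factor_two_roots:
  fixes c d e f s1 s2 s :: "'a::field"
  assumes "c \<noteq> 0" "s1 \<noteq> s2"
    and root1: "c * s1^3 + d * s1^2 + e * s1 + f = 0"
    and root2: "c * s2^3 + d * s2^2 + e * s2 + f = 0"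
  shows "c * s^3 + d * s^2 + e * s + f = c * (s - s1) * (s - s2) * (s - (- d / c - s1 - s2))"
proof -
  define p where "p x = c * x^3 + d * x^2 + e * x + f" for x
  define p1 where "p1 x = c * (x^2 + x * s1 + s1^2) + d * (x + s1) + e" for x
  have p_split: "p x = (x - s1) * p1 x" for x
    using root1 unfolding p_def p1_def by (simp add: algebra_simps power2_eq_square power3_eq_cube)
  have "p1 s2 = 0"
    using p_split[of s2] root2 assms(2) by (simp add: p_def)
  then have "p1 x = (x - s2) * (c * (x + s1 + s2) + d)" for x
    unfolding p1_def by (simp add: algebra_simps power2_eq_square)
  moreover have "c * (x + s1 + s2) + d = c * (x - (- d / c - s1 - s2))" for x
    using assms(1) by (simp add: field_simps)
  ultimately show ?thesis
    using p_split[of s] unfolding p_def by (simp add: ac_simps)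
qed

definition kinetic :: "real \<Rightarrow> real \<Rightarrow> real \<Rightarrow> real \<Rightarrow> real \<Rightarrow> real" where
  "kinetic B s1 s2 s3 r = B * (r^2 - s1) * (s2 - r^2) * (s3 - r^2) / (2 * r^2)"

lemma mem_sqrt_Icc_iff:
  "0 \<le> s1 \<Longrightarrow> r \<in> {sqrt s1..sqrt s2} \<longleftrightarrow> 0 \<le> r \<and> s1 \<le> r^2 \<and> r^2 \<le> s2"
  by (smt (verit) atLeastAtMost_iff real_sqrt_abs real_sqrt_ge_zero real_sqrt_le_iff)

lemma mem_sqrt_Ioo_iff:
  "0 \<le> s1 \<Longrightarrow> r \<in> {sqrt s1<..<sqrt s2} \<longleftrightarrow> 0 < r \<and> s1 < r^2 \<and> r^2 < s2"
  by (smt (verit) greaterThanLessThan_iff real_sqrt_abs real_sqrt_ge_zero real_sqrt_less_iff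
      real_sqrt_gt_zero)

lemma kinetic_pos:
  assumes "0 < B" "0 \<le> s1" "s2 < s3" "r \<in> {sqrt s1<..<sqrt s2}"
  shows "0 < kinetic B s1 s2 s3 r"
  using assms mem_sqrt_Ioo_iff[of s1 r s2]
  by (auto simp: kinetic_def intro!: divide_pos_pos mult_pos_pos)

lemma kinetic_nonneg:
  assumes "0 < B" "0 \<le> s1" "s2 \<le> s3" "r \<in> {sqrt s1..sqrt s2}"
  shows "0 \<le> kinetic B s1 s2 s3 r"
  using assms mem_sqrt_Icc_iff[of s1 r s2]
  by (auto simp: kinetic_def intro!: divide_nonneg_nonneg mult_nonneg_nonneg)

lemma
  assumes "b \<noteq> 0" "0 < s1" "s1 < s2" "s2 < s3"
    and factor: "\<And>s. radial_cubic a b J E s = - b * (s - s1) * (s - s2) * (s - s3)"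
  shows VJ_eq_kinetic: "0 < r \<Longrightarrow> 2 * (E - VJ a b J r) = kinetic (- b) s1 s2 s3 r"
    and r1_eq_sqrt_root: "r1 a b J E = sqrt s1"
    and r2_eq_sqrt_root: "r2 a b J E = sqrt s2"
proof -
  show "2 * (E - VJ a b J r) = kinetic (- b) s1 s2 s3 r" if "0 < r" for r
  proof -
    have "radial_cubic a b J E (r^2) = - b * (r^2 - s1) * (s2 - r^2) * (s3 - r^2)"
      unfolding factor by (simp add: algebra_simps)
    then show ?thesis
      using that VJ_eq_radial_cubic[of r E a b J] by (simp add: kinetic_def)
  qed
  have "{r. 0 < r \<and> E - VJ a b J r = 0} = sqrt ` {s1, s2, s3}"
  proof (intro set_eqI iffI)
    fix r assume "r \<in> {r. 0 < r \<and> E - VJ a b J r = 0}"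
    then have "0 < r" "radial_cubic a b J E (r^2) = 0"
      using VJ_eq_radial_cubic[of r E a b J] by auto
    then show "r \<in> sqrt ` {s1, s2, s3}"
      using assms(1) by (force simp: factor)
  next
    fix r assume "r \<in> sqrt ` {s1, s2, s3}"
    then have "0 < r" "radial_cubic a b J E (r^2) = 0"
      using assms(2-4) by (auto simp: factor)
    then show "r \<in> {r. 0 < r \<and> E - VJ a b J r = 0}"
      using VJ_eq_radial_cubic[of r E a b J] by auto
  qed
  moreover have "sorted_list_of_set (sqrt ` {s1, s2, s3}) = [sqrt s1, sqrt s2, sqrt s3]"
    using assms(2-4) by (intro sorted_list_of_set_unique[THEN iffD1]) auto
  ultimately show "r1 a b J E = sqrt s1" "r2 a b J E = sqrt s2"
    by (simp_all add: r1_def r2_def roots_def)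
qed

lemma
  assumes "b \<noteq> 0" "0 < s1" "s1 < s2" "s2 < s3"
    and factor: "\<And>s. radial_cubic a b J E s = - b * (s - s1) * (s - s2) * (s - s3)"
  shows T_eq_kinetic_integral:
      "T a b J E = 2 * integral {sqrt s1..sqrt s2} (\<lambda>r. 1 / sqrt (kinetic (- b) s1 s2 s3 r))"
    and Mt_eq_kinetic_integral:
      "Mt a b J E = integral {sqrt s1..sqrt s2} (\<lambda>r. r^2 / sqrt (kinetic (- b) s1 s2 s3 r))"
proof -
  have "2 * (E - VJ a b J r) = kinetic (- b) s1 s2 s3 r" if "r \<in> {sqrt s1..sqrt s2}" for r
    using that assms(2)
    by (intro VJ_eq_kinetic[OF assms]) (auto intro: less_le_trans[OF real_sqrt_gt_zero])
  then show "T a b J E = 2 * integral {sqrt s1..sqrt s2} (\<lambda>r. 1 / sqrt (kinetic (- b) s1 s2 s3 r))"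
    and "Mt a b J E = integral {sqrt s1..sqrt s2} (\<lambda>r. r^2 / sqrt (kinetic (- b) s1 s2 s3 r))"
    unfolding T_def Mt_def r1_eq_sqrt_root[OF assms] r2_eq_sqrt_root[OF assms]
    by (auto intro!: integral_cong)
qed

lemma r_div_sqrt_has_integral:
  fixes s1 s2 :: real
  assumes "0 \<le> s1" "s1 < s2"
  shows "((\<lambda>r. r / sqrt ((r^2 - s1) * (s2 - r^2))) has_integral pi / 2) {sqrt s1..sqrt s2}"
proof -
  define u where "u r = (2 * r^2 - s1 - s2) / (s2 - s1)" for r
  have u_deriv:
    "((\<lambda>r. arcsin (u r)) has_real_derivative 2 * (r / sqrt ((r^2 - s1) * (s2 - r^2)))) (at r)"
    if "r \<in> {sqrt s1<..<sqrt s2}" for r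
  proof -
    define X where "X = (r^2 - s1) * (s2 - r^2)"
    have X: "0 < X"
      using that assms mem_sqrt_Ioo_iff[of s1 r s2] by (simp add: X_def)
    have u_sq: "1 - (u r)^2 = 4 * X / (s2 - s1)^2"
      using assms unfolding u_def X_def
      by (simp add: power_divide eq_divide_eq diff_divide_eq_iff)
        (simp add: power2_eq_square algebra_simps)
    then have sqrt_eq: "sqrt (1 - (u r)^2) = 2 * sqrt X / (s2 - s1)"
      using assms X by (simp add: real_sqrt_divide real_sqrt_mult)
    have "0 < 1 - (u r)^2"
      unfolding u_sq using assms X by simp
    then have "\<bar>u r\<bar> < 1"
      by (simp add: abs_square_less_1)
    then have "-1 < u r" "u r < 1"
      by auto
    moreover have "(u has_real_derivative 4 * r / (s2 - s1)) (at r)"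
      unfolding u_def using assms by (auto intro!: derivative_eq_intros)
    ultimately have "((\<lambda>r. arcsin (u r)) has_real_derivative
        inverse (sqrt (1 - (u r)^2)) * (4 * r / (s2 - s1))) (at r)"
      by (rule DERIV_chain2[OF DERIV_arcsin])
    moreover have "inverse (sqrt (1 - (u r)^2)) * (4 * r / (s2 - s1)) = 2 * (r / sqrt X)"
      using assms X unfolding sqrt_eq by (simp add: field_simps)
    ultimately show ?thesis by (simp add: X_def)
  qed
  have "continuous_on {sqrt s1..sqrt s2} (\<lambda>r. arcsin (u r))"
  proof (intro continuous_on_arcsin ballI conjI)
    show "continuous_on {sqrt s1..sqrt s2} u"
      unfolding u_def using assms by (intro continuous_intros) auto
  next
    fix r assume "r \<in> {sqrt s1..sqrt s2}"
    then show "-1 \<le> u r" "u r \<le> 1"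
      using assms mem_sqrt_Icc_iff[of s1 r s2] by (auto simp: u_def field_simps)
  qed
  moreover have "u (sqrt s1) = -1" "u (sqrt s2) = 1"
    using assms by (simp_all add: u_def field_simps)
  ultimately have
    "((\<lambda>r. 2 * (r / sqrt ((r^2 - s1) * (s2 - r^2)))) has_integral pi) {sqrt s1..sqrt s2}"
    using fundamental_theorem_of_calculus_interior[of "sqrt s1" "sqrt s2" "\<lambda>r. arcsin (u r)"]
      assms u_deriv
    by (simp add: has_real_derivative_iff_has_vector_derivative)
  from has_integral_mult_right[OF this, of "1 / 2"] show ?thesis
    by simp
qed

lemma inv_sqrt_quotient_le:
  fixes B Y Z m r :: real
  assumes "0 < B" "0 < Y" "0 < m" "m \<le> Z" "0 < r"
  shows "1 / sqrt (B * Y * Z / (2 * r^2)) \<le> sqrt (2 / (B * m)) * (r / sqrt Y)"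
proof -
  have "1 / sqrt (B * Y * Z / (2 * r^2)) = sqrt (2 * r^2 / (B * Y * Z))"
    by (simp add: real_sqrt_divide)
  also have "\<dots> \<le> sqrt (2 * r^2 / (B * Y * m))"
    using assms by (intro real_sqrt_le_mono frac_le mult_left_mono) auto
  also have "\<dots> = sqrt (2 / (B * m)) * (r / sqrt Y)"
    using assms by (simp add: real_sqrt_mult real_sqrt_divide field_simps)
  finally show ?thesis .
qed

lemma integral_inv_sqrt_ge_ln:
  fixes w :: "real \<Rightarrow> real"
  assumes "0 < A" "m \<le> t" "t < \<rho>"
    and integrable: "(\<lambda>r. 1 / sqrt (w r)) integrable_on {m..t}"
    and w: "\<And>r. r \<in> {m..t} \<Longrightarrow> 0 < w r \<and> w r \<le> A * (\<rho> - r)^2"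
  shows "(ln (\<rho> - m) - ln (\<rho> - t)) / sqrt A \<le> integral {m..t} (\<lambda>r. 1 / sqrt (w r))"
proof -
  have "((\<lambda>r. 1 / (sqrt A * (\<rho> - r))) has_integral
      (- ln (\<rho> - t) / sqrt A) - (- ln (\<rho> - m) / sqrt A)) {m..t}"
  proof (rule fundamental_theorem_of_calculus[OF \<open>m \<le> t\<close>])
    fix r assume "r \<in> {m..t}"
    then have "r < \<rho>"
      using assms by auto
    then have "((\<lambda>r. - ln (\<rho> - r) / sqrt A) has_real_derivative 1 / (sqrt A * (\<rho> - r))) (at r)"
      using \<open>0 < A\<close> by (auto intro!: derivative_eq_intros simp: field_simps)
    then show "((\<lambda>r. - ln (\<rho> - r) / sqrt A) has_vector_derivative 1 / (sqrt A * (\<rho> - r)))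
        (at r within {m..t})"
      by (simp add: has_real_derivative_iff_has_vector_derivative has_vector_derivative_at_within)
  qed
  moreover have "1 / (sqrt A * (\<rho> - r)) \<le> 1 / sqrt (w r)" if r: "r \<in> {m..t}" for r
  proof -
    have "1 / (sqrt A * (\<rho> - r)) = 1 / sqrt (A * (\<rho> - r)^2)"
      using r assms by (simp add: real_sqrt_mult)
    also have "\<dots> \<le> 1 / sqrt (w r)"
      using w[OF r] by (intro divide_left_mono real_sqrt_le_mono mult_pos_pos) auto
    finally show ?thesis .
  qed
  ultimately show ?thesis
    using integrable by (force intro: has_integral_integral has_integral_le simp: diff_divide_distrib)
qed
lemma inv_sqrt_kinetic_le:
  assumes "0 < B" "0 \<le> s1" "s2 < s3" "r \<in> {sqrt s1<..<sqrt s2}"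
  shows "1 / sqrt (kinetic B s1 s2 s3 r)
    \<le> sqrt (2 / (B * (s3 - s2))) * (r / sqrt ((r^2 - s1) * (s2 - r^2)))"
proof -
  have "0 < r" "s1 < r^2" "r^2 < s2"
    using assms mem_sqrt_Ioo_iff[of s1 r s2] by auto
  then show ?thesis
    using assms inv_sqrt_quotient_le[of B "(r^2 - s1) * (s2 - r^2)" "s3 - s2" "s3 - r^2" r]
    by (simp add: kinetic_def mult.assoc)
qed

lemma inv_sqrt_kinetic_le_away:
  assumes "0 < B" "0 < d" "0 < r" "s1 < r^2" "d \<le> s2 - r^2" "d \<le> s3 - r^2"
  shows "1 / sqrt (kinetic B s1 s2 s3 r) \<le> sqrt (2 / (B * d^2)) * (r / sqrt (r^2 - s1))"
proof -
  have "d^2 \<le> (s2 - r^2) * (s3 - r^2)"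
    unfolding power2_eq_square[of d] using assms by (intro mult_mono) auto
  then show ?thesis
    using assms inv_sqrt_quotient_le[of B "r^2 - s1" "d^2" "(s2 - r^2) * (s3 - r^2)" r]
    by (simp add: kinetic_def mult.assoc)
qed

lemma integrable_div_sqrt_kinetic:
  assumes "0 < B" "0 \<le> s1" "s1 < s2" "s2 < s3" and h: "continuous_on {sqrt s1..sqrt s2} h"
  shows "(\<lambda>r. h r / sqrt (kinetic B s1 s2 s3 r)) integrable_on {sqrt s1..sqrt s2}"
proof -
  define g where "g r = sqrt (2 / (B * (s3 - s2))) * (r / sqrt ((r^2 - s1) * (s2 - r^2)))" for r
  obtain M where M: "\<forall>r\<in>{sqrt s1..sqrt s2}. \<bar>h r\<bar> \<le> M"
    using compact_imp_bounded[OF compact_continuous_image[OF h compact_Icc]]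
    by (metis bounded_iff imageI real_norm_def)
  have "(\<lambda>r. r / sqrt ((r^2 - s1) * (s2 - r^2))) integrable_on {sqrt s1<..<sqrt s2}"
    using r_div_sqrt_has_integral[OF assms(2,3)] integrable_on_Icc_iff_Ioo by blast
  then have "g integrable_on {sqrt s1<..<sqrt s2}"
    unfolding g_def by (rule integrable_on_mult_right)
  then have majorant: "(\<lambda>r. M * g r) integrable_on {sqrt s1<..<sqrt s2}"
    by (rule integrable_on_mult_right)
  have "continuous_on {sqrt s1<..<sqrt s2} (\<lambda>r. h r / sqrt (kinetic B s1 s2 s3 r))"
    unfolding kinetic_def
  proof (intro continuous_intros ballI)
    show "continuous_on {sqrt s1<..<sqrt s2} h"
      using h by (rule continuous_on_subset) auto
  next
    fix r assume r: "r \<in> {sqrt s1<..<sqrt s2}"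
    show "2 * r^2 \<noteq> 0"
      using r assms mem_sqrt_Ioo_iff[of s1 r s2] by simp
    show "sqrt (B * (r^2 - s1) * (s2 - r^2) * (s3 - r^2) / (2 * r^2)) \<noteq> 0"
      using real_sqrt_gt_zero[OF kinetic_pos[OF assms(1,2,4) r]] unfolding kinetic_def by linarith
  qed
  then have measurable:
    "(\<lambda>r. h r / sqrt (kinetic B s1 s2 s3 r))
      \<in> borel_measurable (lebesgue_on {sqrt s1<..<sqrt s2})"
    by (rule continuous_imp_measurable_on_sets_lebesgue) simp
  have bound: "norm (h r / sqrt (kinetic B s1 s2 s3 r)) \<le> M * g r"
    if r: "r \<in> {sqrt s1<..<sqrt s2}" for r
  proof -
    have "r \<in> {sqrt s1..sqrt s2}"
      using r by simp
    then have "\<bar>h r\<bar> \<le> M"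
      using M by blast
    moreover have pos: "0 < kinetic B s1 s2 s3 r"
      using kinetic_pos[OF assms(1,2,4) r] .
    ultimately have "\<bar>h r\<bar> * (1 / sqrt (kinetic B s1 s2 s3 r)) \<le> M * g r"
      using inv_sqrt_kinetic_le[OF assms(1,2,4) r] order_trans[OF abs_ge_zero] unfolding g_def
      by (intro mult_mono) simp_all
    then show ?thesis
      using pos by (simp add: abs_div)
  qed
  have "(\<lambda>r. h r / sqrt (kinetic B s1 s2 s3 r)) integrable_on {sqrt s1<..<sqrt s2}"
    by (rule measurable_bounded_by_integrable_imp_integrable[OF measurable majorant bound]) simp_all
  then show ?thesis
    using integrable_on_Icc_iff_Ioo by blast
qed

lemma r_div_sqrt_diff_has_integral:
  assumes "0 \<le> s1" "s1 \<le> s2"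
  shows "((\<lambda>r. r / sqrt (r^2 - s1)) has_integral sqrt (s2 - s1)) {sqrt s1..sqrt s2}"
proof -
  have "((\<lambda>r. r / sqrt (r^2 - s1)) has_integral sqrt (sqrt s2 ^ 2 - s1) - sqrt (sqrt s1 ^ 2 - s1))
      {sqrt s1..sqrt s2}"
  proof (rule fundamental_theorem_of_calculus_interior)
    show "sqrt s1 \<le> sqrt s2"
      using assms by simp
    show "continuous_on {sqrt s1..sqrt s2} (\<lambda>r. sqrt (r^2 - s1))"
      by (intro continuous_intros)
  next
    fix r assume "r \<in> {sqrt s1<..<sqrt s2}"
    then have "0 < r" "s1 < r^2"
      using assms mem_sqrt_Ioo_iff[of s1 r s2] by auto
    then have "((\<lambda>r. sqrt (r^2 - s1)) has_real_derivative r / sqrt (r^2 - s1)) (at r)"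
      by (auto intro!: derivative_eq_intros simp: field_simps)
    then show "((\<lambda>r. sqrt (r^2 - s1)) has_vector_derivative r / sqrt (r^2 - s1)) (at r)"
      by (simp add: has_real_derivative_iff_has_vector_derivative)
  qed
  then show ?thesis
    using assms by simp
qed

lemma kinetic_defect_le:
  assumes "0 < B" "0 \<le> s1" "s2 \<le> c" "c < s3" "0 < \<epsilon>" "c - s2 \<le> \<epsilon> / 2"
    and r: "r \<in> {sqrt s1..sqrt s2}"
  shows "(c - r^2) / sqrt (kinetic B s1 s2 s3 r)
    \<le> \<epsilon> * (1 / sqrt (kinetic B s1 s2 s3 r))
      + c * (sqrt (8 / (B * \<epsilon>^2)) * (r / sqrt (r^2 - s1)))"
proof -
  have r': "0 \<le> r" "s1 \<le> r^2" "r^2 \<le> s2" "0 \<le> kinetic B s1 s2 s3 r"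
    using assms mem_sqrt_Icc_iff[of s1 r s2] kinetic_nonneg[OF assms(1,2) _ r] by auto
  consider "c - \<epsilon> \<le> r^2" | "r^2 = s1"
    | "0 < r" "s1 < r^2" "\<epsilon> / 2 \<le> s2 - r^2" "\<epsilon> / 2 \<le> s3 - r^2"
    using r' assms by (cases "r = 0") force+
  then show ?thesis
  proof cases
    case 1
    then have "(c - r^2) * (1 / sqrt (kinetic B s1 s2 s3 r))
        \<le> \<epsilon> * (1 / sqrt (kinetic B s1 s2 s3 r))"
      using r' by (intro mult_right_mono) auto
    then show ?thesis
      using r' assms by (simp add: add_increasing2)
  next
    case 2
    then show ?thesis
      using r' assms by (simp add: kinetic_def)
  next
    case 3
    have "2 / (B * (\<epsilon> / 2)^2) = 8 / (B * \<epsilon>^2)"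
      by (simp add: power_divide)
    then have "1 / sqrt (kinetic B s1 s2 s3 r)
        \<le> sqrt (8 / (B * \<epsilon>^2)) * (r / sqrt (r^2 - s1))"
      using inv_sqrt_kinetic_le_away[of B "\<epsilon> / 2" r s1 s2 s3] 3 assms by simp
    then have "(c - r^2) * (1 / sqrt (kinetic B s1 s2 s3 r))
        \<le> c * (sqrt (8 / (B * \<epsilon>^2)) * (r / sqrt (r^2 - s1)))"
      using r' assms by (intro mult_mono) auto
    then show ?thesis
      using r' assms by (simp add: add_increasing)
  qed
qed

lemma kinetic_defect_integral_bounds:
  assumes "0 < B" "0 \<le> s1" "s1 < s2" "s2 \<le> c" "c < s3" "0 < \<epsilon>" "c - s2 \<le> \<epsilon> / 2"
  shows "0 \<le> integral {sqrt s1..sqrt s2} (\<lambda>r. (c - r^2) / sqrt (kinetic B s1 s2 s3 r))"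
    and "integral {sqrt s1..sqrt s2} (\<lambda>r. (c - r^2) / sqrt (kinetic B s1 s2 s3 r))
          \<le> \<epsilon> * integral {sqrt s1..sqrt s2} (\<lambda>r. 1 / sqrt (kinetic B s1 s2 s3 r))
            + c * sqrt (8 * c / B) / \<epsilon>"
proof -
  define K where "K r = kinetic B s1 s2 s3 r" for r
  define C where "C = sqrt (8 / (B * \<epsilon>^2))"
  have defect_int: "(\<lambda>r. (c - r^2) / sqrt (K r)) integrable_on {sqrt s1..sqrt s2}"
    and inv_int: "(\<lambda>r. 1 / sqrt (K r)) integrable_on {sqrt s1..sqrt s2}"
    unfolding K_def using assms by (auto intro!: integrable_div_sqrt_kinetic continuous_intros)
  have kernel_int: "((\<lambda>r. r / sqrt (r^2 - s1)) has_integral sqrt (s2 - s1)) {sqrt s1..sqrt s2}"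
    using assms by (intro r_div_sqrt_diff_has_integral) auto
  then have G_int:
    "((\<lambda>r. C * (r / sqrt (r^2 - s1))) has_integral C * sqrt (s2 - s1)) {sqrt s1..sqrt s2}"
    by (rule has_integral_mult_right)
  show "0 \<le> integral {sqrt s1..sqrt s2} (\<lambda>r. (c - r^2) / sqrt (kinetic B s1 s2 s3 r))"
    unfolding K_def[symmetric]
  proof (rule integral_nonneg[OF defect_int])
    fix r assume r: "r \<in> {sqrt s1..sqrt s2}"
    have "0 \<le> K r"
      unfolding K_def using assms by (intro kinetic_nonneg[OF _ _ _ r]) auto
    then show "0 \<le> (c - r^2) / sqrt (K r)"
      using r assms mem_sqrt_Icc_iff[of s1 r s2] by (simp add: divide_nonneg_nonneg)
  qed
  have "integral {sqrt s1..sqrt s2} (\<lambda>r. (c - r^2) / sqrt (K r))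
      \<le> integral {sqrt s1..sqrt s2}
          (\<lambda>r. \<epsilon> * (1 / sqrt (K r)) + c * (C * (r / sqrt (r^2 - s1))))"
    using defect_int inv_int has_integral_integrable[OF kernel_int] kinetic_defect_le[OF assms(1,2,4-7)]
    unfolding K_def C_def
    by (intro integral_le integrable_add integrable_on_mult_right) auto
  also have "\<dots> = \<epsilon> * integral {sqrt s1..sqrt s2} (\<lambda>r. 1 / sqrt (K r))
      + c * integral {sqrt s1..sqrt s2} (\<lambda>r. C * (r / sqrt (r^2 - s1)))"
    unfolding integral_add[OF integrable_on_mult_right[OF inv_int]
        integrable_on_mult_right[OF has_integral_integrable[OF G_int]]] integral_mult_right ..
  also have "\<dots> = \<epsilon> * integral {sqrt s1..sqrt s2} (\<lambda>r. 1 / sqrt (K r)) + c * (C * sqrt (s2 - s1))"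
    unfolding integral_unique[OF G_int] ..
  also have "\<dots> \<le> \<epsilon> * integral {sqrt s1..sqrt s2} (\<lambda>r. 1 / sqrt (K r)) + c * (C * sqrt c)"
    using assms by (intro add_left_mono mult_left_mono) (auto simp: C_def)
  also have "c * (C * sqrt c) = c * sqrt (8 * c / B) / \<epsilon>"
    using assms by (simp add: C_def real_sqrt_divide real_sqrt_mult field_simps)
  finally show "integral {sqrt s1..sqrt s2} (\<lambda>r. (c - r^2) / sqrt (kinetic B s1 s2 s3 r))
      \<le> \<epsilon> * integral {sqrt s1..sqrt s2} (\<lambda>r. 1 / sqrt (kinetic B s1 s2 s3 r))
        + c * sqrt (8 * c / B) / \<epsilon>"
    unfolding K_def .
qed

lemma half_T_minus_Mt_eq_integral:
  assumes "b < 0" "0 < s1" "s1 < s2" "s2 < s3"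
    and factor: "\<And>s. radial_cubic a b J E s = - b * (s - s1) * (s - s2) * (s - s3)"
  shows "c / 2 * T a b J E - Mt a b J E
    = integral {sqrt s1..sqrt s2} (\<lambda>r. (c - r^2) / sqrt (kinetic (- b) s1 s2 s3 r))"
proof -
  define K where "K = kinetic (- b) s1 s2 s3"
  have assms': "b \<noteq> 0" "0 < s1" "s1 < s2" "s2 < s3"
    using assms by auto
  have inv_int: "(\<lambda>r. 1 / sqrt (K r)) integrable_on {sqrt s1..sqrt s2}"
    and sq_int: "(\<lambda>r. r^2 / sqrt (K r)) integrable_on {sqrt s1..sqrt s2}"
    using assms unfolding K_def by (auto intro!: integrable_div_sqrt_kinetic continuous_intros)
  have "c / 2 * T a b J E - Mt a b J E
      = c * integral {sqrt s1..sqrt s2} (\<lambda>r. 1 / sqrt (K r))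
        - integral {sqrt s1..sqrt s2} (\<lambda>r. r^2 / sqrt (K r))"
    unfolding T_eq_kinetic_integral[OF assms' factor] Mt_eq_kinetic_integral[OF assms' factor] K_def
    by simp
  also have "\<dots> = integral {sqrt s1..sqrt s2} (\<lambda>r. c * (1 / sqrt (K r)) - r^2 / sqrt (K r))"
    by (simp only: integral_diff[OF integrable_on_mult_right[OF inv_int] sq_int] integral_mult_right)
  also have "\<dots> = integral {sqrt s1..sqrt s2} (\<lambda>r. (c - r^2) / sqrt (K r))"
    by (simp add: diff_divide_distrib)
  finally show ?thesis
    unfolding K_def .
qed

lemma tendsto_divide_at_top_zero:
  fixes f g :: "'a \<Rightarrow> real"
  assumes f: "filterlim f at_top F"
    and g: "\<And>\<epsilon>. 0 < \<epsilon> \<Longrightarrow> \<exists>C. eventually (\<lambda>x. \<bar>g x\<bar> \<le> \<epsilon> * f x + C) F"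
  shows "((\<lambda>x. g x / f x) \<longlongrightarrow> 0) F"
proof (rule tendstoI)
  fix e :: real assume "0 < e"
  then obtain C where C: "eventually (\<lambda>x. \<bar>g x\<bar> \<le> e / 2 * f x + C) F"
    using g[of "e / 2"] by auto
  moreover have "eventually (\<lambda>x. 2 * \<bar>C\<bar> / e + 1 \<le> f x) F"
    using f by (simp add: filterlim_at_top)
  ultimately show "eventually (\<lambda>x. dist (g x / f x) 0 < e) F"
  proof eventually_elim
    case (elim x)
    have "0 \<le> 2 * \<bar>C\<bar> / e"
      using \<open>0 < e\<close> by simp
    then have "0 < f x" "2 * \<bar>C\<bar> / e < f x"
      using elim(2) by linarith+
    then have "2 * \<bar>C\<bar> < e * f x"
      using \<open>0 < e\<close> by (simp add: divide_less_eq mult.commute)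
    moreover have "e / 2 * f x = e * f x / 2"
      by simp
    ultimately have "\<bar>g x\<bar> < e * f x"
      using elim(1) by linarith
    then show ?case
      using \<open>0 < f x\<close> by (simp add: abs_divide divide_less_eq)
  qed
qed

locale separatrix =
  fixes a b q J :: real
  assumes b_neg: "b < 0" and q_pos: "0 < q" and q_sq_less: "q^2 < a / 3"
    and J_eq: "J = q * (q^2 - a) / b"
begin

abbreviation Ep :: real where "Ep \<equiv> Eplus a b J"

definition smax :: real where "smax = (q^2 - a) / b"

definition sthird :: real where "sthird = -2 * q^2 / b"

definition smid :: real where "smid = (smax + sthird) / 2"

lemma a_pos: "0 < a"
  using q_sq_less zero_less_power[OF q_pos, of 2] by linarith

lemma q_sq_minus_a_neg: "q^2 - a < 0"
  using q_sq_less a_pos by linarith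

lemma J_pos: "0 < J"
  using b_neg mult_pos_neg[OF q_pos q_sq_minus_a_neg] unfolding J_eq by (simp add: divide_neg_neg)

lemma smax_pos: "0 < smax"
  using b_neg q_sq_minus_a_neg unfolding smax_def by (simp add: divide_neg_neg)

lemma sthird_pos: "0 < sthird"
  using b_neg q_pos unfolding sthird_def by (simp add: divide_pos_neg)

lemma sthird_less_smax: "sthird < smax"
  using q_sq_less unfolding sthird_def smax_def by (intro divide_strict_right_mono_neg b_neg) simp

lemma smid_bounds: "sthird < smid" "smid < smax" "0 < smid"
  using sthird_less_smax sthird_pos unfolding smid_def by auto

lemma small_q_eq: "small_q a b J = q"
  unfolding small_q_def
proof (rule the_equality)
  show "0 < q \<and> q^2 < a / 3 \<and> J = q * (q^2 - a) / b"
    using q_pos q_sq_less J_eq by simp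
next
  fix p assume p: "0 < p \<and> p^2 < a / 3 \<and> J = p * (p^2 - a) / b"
  then have "(p - q) * (p^2 + p * q + q^2 - a) = 0"
    using b_neg J_eq by (simp add: field_simps power2_eq_square power3_eq_cube)
  moreover have "2 * p * q \<le> p^2 + q^2"
    using power2_diff[of p q] zero_le_power2[of "p - q"] by linarith
  then have "p^2 + p * q + q^2 - a \<noteq> 0"
    using p q_sq_less by linarith
  ultimately show "p = q"
    by simp
qed

lemma Eplus_eq: "Ep = (q^2 - a) * (3 * q^2 + a) / (4 * b)"
  by (simp add: Eplus_def small_q_eq)

lemma radial_cubic_eq:
  "radial_cubic a b J E s = - b * (s - smax)^2 * (s - sthird) - 4 * (Ep - E) * s"
  using b_neg unfolding radial_cubic_def Eplus_eq unfolding J_eq smax_def sthird_def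
  by (simp add: field_simps eval_nat_numeral)

lemma radial_cubic_root_near_smax:
  assumes "radial_cubic a b J E s = 0" "E \<le> Ep" "smid \<le> s" "s \<le> smax"
  shows "(smax - s)^2 * (- b * ((smax - sthird) / 2)) \<le> 4 * (Ep - E) * smax"
proof -
  have "(smax - s)^2 * (- b * ((smax - sthird) / 2)) \<le> (smax - s)^2 * (- b * (s - sthird))"
    using b_neg assms(3) unfolding smid_def by (intro mult_left_mono mult_left_mono_neg) auto
  also have "\<dots> = 4 * (Ep - E) * s"
    using assms(1) unfolding radial_cubic_eq by (simp add: power2_commute ac_simps)
  also have "\<dots> \<le> 4 * (Ep - E) * smax"
    using assms(2,4) by (simp add: mult_left_mono)
  finally show ?thesis .
qed

lemma radial_cubic_factor_near_Ep:
  assumes "E < Ep" and near: "(Ep - E) * 4 * smid < - b * ((smax - sthird) / 2)^3"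
  obtains s1 s2 s3 where "sthird < s1" "s1 < smid" "smid < s2" "s2 < smax" "smax < s3"
    and "(smax - s2)^2 * (- b * ((smax - sthird) / 2)) \<le> 4 * (Ep - E) * smax"
    and "\<And>s. radial_cubic a b J E s = - b * (s - s1) * (s - s2) * (s - s3)"
proof -
  define P where "P = radial_cubic a b J E"
  define h where "h = (smax - sthird) / 2"
  have P_eq: "P s = - b * (s - smax)^2 * (s - sthird) - 4 * (Ep - E) * s" for s
    unfolding P_def by (rule radial_cubic_eq)
  have h: "0 < h" "smid - sthird = h" "smid - smax = - h"
    using sthird_less_smax unfolding h_def smid_def by (auto simp: field_simps)
  have P_sthird: "P sthird < 0" and P_smax: "P smax < 0"
    using P_eq[of sthird] P_eq[of smax] assms(1) sthird_pos smax_pos by simp_all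
  have "P smid = - b * h^3 - 4 * (Ep - E) * smid"
    using h unfolding P_eq by (simp add: power2_eq_square power3_eq_cube)
  then have P_smid: "0 < P smid"
    using near unfolding h_def by (simp add: algebra_simps)
  have P_cont: "continuous_on S P" for S
    unfolding P_def radial_cubic_def by (intro continuous_intros)
  obtain s1 where s1: "sthird < s1" "s1 < smid" "P s1 = 0"
    using IVT'[of P sthird 0 smid, OF _ _ _ P_cont] P_sthird P_smid smid_bounds
    by (smt (verit))
  obtain s2 where s2: "smid < s2" "s2 < smax" "P s2 = 0"
    using IVT2'[of P smax 0 smid, OF _ _ _ P_cont] P_smax P_smid smid_bounds
    by (smt (verit))
  define s3 where "s3 = - 2 * a / b - s1 - s2"
  have factor: "P s = - b * (s - s1) * (s - s2) * (s - s3)" for s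
    using cubic_factor_two_roots[of "- b" s1 s2 "- 2 * a" "4 * E" "- 2 * J^2" s] s1 s2 b_neg
    unfolding P_def radial_cubic_def s3_def by simp
  have "smax < s3"
  proof (rule ccontr)
    assume "\<not> smax < s3"
    then have "0 \<le> - b * (smax - s1) * (smax - s2) * (smax - s3)"
      using b_neg s1 s2 smid_bounds by (intro mult_nonneg_nonneg) auto
    then show False
      using factor[of smax] P_smax by simp
  qed
  moreover have "(smax - s2)^2 * (- b * ((smax - sthird) / 2)) \<le> 4 * (Ep - E) * smax"
    using s2 assms(1) unfolding P_def by (intro radial_cubic_root_near_smax) auto
  ultimately show ?thesis
    using that s1 s2 factor unfolding P_def by blast
qed

lemma eventually_radial_cubic_factor:
  "\<forall>\<^sub>F E in at_left Ep. \<exists>s1 s2 s3. 0 < s1 \<and> s1 < smid \<and> smid < s2 \<and> s2 < smax \<and> smax < s3 \<and>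
     (smax - s2)^2 * (- b * ((smax - sthird) / 2)) \<le> 4 * (Ep - E) * smax \<and>
     (\<forall>s. radial_cubic a b J E s = - b * (s - s1) * (s - s2) * (s - s3))"
proof -
  define \<delta> where "\<delta> = - b * ((smax - sthird) / 2)^3 / (4 * smid)"
  have "0 < \<delta>"
    unfolding \<delta>_def using b_neg sthird_less_smax smid_bounds
    by (intro divide_pos_pos mult_pos_pos) auto
  then have "\<forall>\<^sub>F E in at_left Ep. E \<in> {Ep - \<delta><..<Ep}"
    by (intro eventually_at_left_real) simp
  then show ?thesis
  proof (rule eventually_mono)
    fix E assume E: "E \<in> {Ep - \<delta><..<Ep}"
    then have "E < Ep" and near: "(Ep - E) * 4 * smid < - b * ((smax - sthird) / 2)^3"
      using smid_bounds unfolding \<delta>_def by (simp_all add: field_simps)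
    obtain s1 s2 s3 where "sthird < s1" "s1 < smid" "smid < s2" "s2 < smax" "smax < s3"
      "(smax - s2)^2 * (- b * ((smax - sthird) / 2)) \<le> 4 * (Ep - E) * smax"
      "\<And>s. radial_cubic a b J E s = - b * (s - s1) * (s - s2) * (s - s3)"
      using radial_cubic_factor_near_Ep[OF \<open>E < Ep\<close> near] by blast
    then show "\<exists>s1 s2 s3. 0 < s1 \<and> s1 < smid \<and> smid < s2 \<and> s2 < smax \<and> smax < s3 \<and>
       (smax - s2)^2 * (- b * ((smax - sthird) / 2)) \<le> 4 * (Ep - E) * smax \<and>
       (\<forall>s. radial_cubic a b J E s = - b * (s - s1) * (s - s2) * (s - s3))"
      using sthird_pos by (intro exI[of _ s1] exI[of _ s2] exI[of _ s3]) auto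
  qed
qed

lemma r2_sq_tendsto: "((\<lambda>E. (r2 a b J E)^2) \<longlongrightarrow> smax) (at_left Ep)"
proof -
  define \<kappa> where "\<kappa> = 4 * smax / (- b * ((smax - sthird) / 2))"
  have "0 < - b * ((smax - sthird) / 2)"
    using b_neg sthird_less_smax by (simp add: mult_neg_pos)
  have \<kappa>: "0 < \<kappa>"
    unfolding \<kappa>_def using smax_pos \<open>0 < - b * ((smax - sthird) / 2)\<close> by (intro divide_pos_pos) auto
  have "\<forall>\<^sub>F E in at_left Ep. smax - sqrt (\<kappa> * (Ep - E)) \<le> (r2 a b J E)^2 \<and> (r2 a b J E)^2 \<le> smax"
    using eventually_radial_cubic_factor
  proof eventually_elim
    case (elim E)
    then obtain s1 s2 s3 where s: "0 < s1" "s1 < smid" "smid < s2" "s2 < smax" "smax < s3"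
      and gap: "(smax - s2)^2 * (- b * ((smax - sthird) / 2)) \<le> 4 * (Ep - E) * smax"
      and factor: "\<And>s. radial_cubic a b J E s = - b * (s - s1) * (s - s2) * (s - s3)"
      by blast
    have "r2 a b J E = sqrt s2"
      using b_neg s by (intro r2_eq_sqrt_root[OF _ _ _ _ factor]) auto
    moreover have "(smax - s2)^2 \<le> \<kappa> * (Ep - E)"
      using gap \<open>0 < - b * ((smax - sthird) / 2)\<close> unfolding \<kappa>_def by (simp add: field_simps)
    then have "smax - s2 \<le> sqrt (\<kappa> * (Ep - E))"
      by (rule real_le_rsqrt)
    ultimately show ?case
      using s by simp
  qed
  then have lower: "\<forall>\<^sub>F E in at_left Ep. smax - sqrt (\<kappa> * (Ep - E)) \<le> (r2 a b J E)^2"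
    and upper: "\<forall>\<^sub>F E in at_left Ep. (r2 a b J E)^2 \<le> smax"
    by (simp_all add: eventually_conj_iff)
  have "((\<lambda>E. smax - sqrt (\<kappa> * (Ep - E))) \<longlongrightarrow> smax - sqrt (\<kappa> * (Ep - Ep))) (at_left Ep)"
    by (intro tendsto_intros)
  then have "((\<lambda>E. smax - sqrt (\<kappa> * (Ep - E))) \<longlongrightarrow> smax) (at_left Ep)"
    by simp
  from tendsto_sandwich[OF lower upper this tendsto_const] show ?thesis .
qed

lemma eventually_r2_bounds: "\<forall>\<^sub>F E in at_left Ep. sqrt smid < r2 a b J E \<and> r2 a b J E < sqrt smax"
  using eventually_radial_cubic_factor
proof eventually_elim
  case (elim E)
  then obtain s1 s2 s3 where s: "0 < s1" "s1 < smid" "smid < s2" "s2 < smax" "smax < s3"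
    and factor: "\<And>s. radial_cubic a b J E s = - b * (s - s1) * (s - s2) * (s - s3)"
    by blast
  have "r2 a b J E = sqrt s2"
    using b_neg s by (intro r2_eq_sqrt_root[OF _ _ _ _ factor]) auto
  then show ?case
    using s by simp
qed

lemma sqrt_smax_minus_r2_tendsto:
  "filterlim (\<lambda>E. sqrt smax - r2 a b J E) (at_right 0) (at_left Ep)"
proof -
  have "((\<lambda>E. sqrt smax - sqrt ((r2 a b J E)^2)) \<longlongrightarrow> sqrt smax - sqrt smax) (at_left Ep)"
    by (intro tendsto_intros r2_sq_tendsto)
  moreover have "\<forall>\<^sub>F E in at_left Ep. sqrt smax - sqrt ((r2 a b J E)^2) = sqrt smax - r2 a b J E"
    using eventually_r2_bounds
    by (elim eventually_mono)
      (auto intro!: abs_of_pos less_trans[OF real_sqrt_gt_zero[OF smid_bounds(3)]])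
  ultimately have "((\<lambda>E. sqrt smax - r2 a b J E) \<longlongrightarrow> sqrt smax - sqrt smax) (at_left Ep)"
    by (rule Lim_transform_eventually)
  then have "((\<lambda>E. sqrt smax - r2 a b J E) \<longlongrightarrow> 0) (at_left Ep)"
    by simp
  then show ?thesis
    using eventually_r2_bounds by (intro tendsto_imp_filterlim_at_right) (auto elim: eventually_mono)
qed

definition quad_coeff :: real where
  "quad_coeff = - 2 * b * smax * (smax - sthird) / smid"

lemma quad_coeff_pos: "0 < quad_coeff"
proof -
  have "0 < - 2 * b" "0 < smax - sthird"
    using b_neg sthird_less_smax by auto
  then have "0 < (- 2 * b) * smax * (smax - sthird)"
    using smax_pos by (metis mult_pos_pos)
  then show ?thesis
    unfolding quad_coeff_def using smid_bounds(3) by (rule divide_pos_pos)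
qed

lemma VJ_gap_le_quad:
  assumes "E \<le> Ep" "0 < r" "smid \<le> r^2" "r^2 \<le> smax"
  shows "2 * (E - VJ a b J r) \<le> quad_coeff * (sqrt smax - r)^2"
proof -
  define Y where "Y = (smax - r^2)^2"
  have "2 * (E - VJ a b J r) \<le> - b * Y * (r^2 - sthird) / (2 * r^2)"
    unfolding VJ_eq_radial_cubic[OF less_imp_neq[OF assms(2), symmetric]] radial_cubic_eq Y_def
    using assms
    by (intro divide_right_mono) (auto simp: power2_commute)
  also have "\<dots> \<le> - b * Y * (smax - sthird) / (2 * smid)"
  proof (rule frac_le)
    show "0 \<le> - b * Y * (smax - sthird)"
      by (intro mult_nonneg_nonneg) (use b_neg sthird_less_smax in \<open>auto simp: Y_def\<close>)
    have nonneg: "0 \<le> - b * Y"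
      using b_neg by (intro mult_nonneg_nonneg) (auto simp: Y_def)
    show "- b * Y * (r^2 - sthird) \<le> - b * Y * (smax - sthird)"
      by (rule mult_left_mono[OF _ nonneg]) (use assms in simp)
  qed (use assms smid_bounds in auto)
  also have "\<dots> \<le> - b * (4 * smax * (sqrt smax - r)^2) * (smax - sthird) / (2 * smid)"
  proof -
    have "r \<le> sqrt smax"
      using assms real_le_rsqrt by blast
    have "Y = (sqrt smax - r)^2 * (sqrt smax + r)^2"
      using smax_pos unfolding Y_def power_mult_distrib[symmetric]
      by (simp add: power2_eq_square algebra_simps)
    also have "\<dots> \<le> (sqrt smax - r)^2 * (2 * sqrt smax)^2"
      using \<open>r \<le> sqrt smax\<close> assms by (intro mult_left_mono power_mono) auto
    finally have "Y \<le> 4 * smax * (sqrt smax - r)^2"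
      using smax_pos by (simp add: power_mult_distrib mult.commute)
    then show ?thesis
      using b_neg sthird_less_smax smid_bounds
      by (intro divide_right_mono mult_right_mono mult_left_mono) auto
  qed
  also have "\<dots> = quad_coeff * (sqrt smax - r)^2"
    unfolding quad_coeff_def using smid_bounds by (simp add: field_simps)
  finally show ?thesis .
qed

lemma T_ge_ln_of_factor:
  assumes "E < Ep" "0 < s1" "s1 < smid" "smid < s2" "s2 < smax" "smax < s3"
    and factor: "\<And>s. radial_cubic a b J E s = - b * (s - s1) * (s - s2) * (s - s3)"
    and near: "2 * (sqrt smax - sqrt s2) \<le> sqrt smax - sqrt smid"
  shows "2 * (ln (sqrt smax - sqrt smid) - ln (2 * (sqrt smax - sqrt s2))) / sqrt quad_coeff
    \<le> T a b J E"
proof -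
  define K where "K = kinetic (- b) s1 s2 s3"
  \<comment> \<open>At r2 = sqrt s2 the integrand is 1 / sqrt 0 = 0, so the comparison with 1 / (sqrt smax - r)
     stops at t < r2, chosen such that sqrt smax - t = 2 (sqrt smax - r2).\<close>
  define t where "t = 2 * sqrt s2 - sqrt smax"
  have s: "b \<noteq> 0" "0 < s1" "s1 < s2" "s2 < s3" "0 < - b"
    using assms b_neg by auto
  have integrable: "(\<lambda>r. 1 / sqrt (K r)) integrable_on {sqrt s1..sqrt s2}"
    using integrable_div_sqrt_kinetic[of "- b" s1 s2 s3 "\<lambda>_. 1"] s unfolding K_def by simp
  have t: "sqrt smid \<le> t" "t < sqrt s2" "sqrt s2 < sqrt smax"
    using near assms unfolding t_def by auto
  have "sqrt s1 < sqrt smid"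
    using assms by simp
  then have sub: "{sqrt smid..t} \<subseteq> {sqrt s1<..<sqrt s2}"
    using t by (intro subsetI) (simp only: atLeastAtMost_iff greaterThanLessThan_iff, linarith)
  have K_le: "0 < K r \<and> K r \<le> quad_coeff * (sqrt smax - r)^2" if r: "r \<in> {sqrt smid..t}" for r
  proof
    show "0 < K r"
      unfolding K_def using sub r s by (intro kinetic_pos) auto
    have r_pos: "0 < r"
      using r smid_bounds by (auto intro: less_le_trans[OF real_sqrt_gt_zero])
    have "r \<in> {sqrt smid..sqrt smax}"
      using r t unfolding atLeastAtMost_iff by linarith
    then have "smid \<le> r^2" "r^2 \<le> smax"
      using mem_sqrt_Icc_iff[of smid r smax] smid_bounds by auto
    then show "K r \<le> quad_coeff * (sqrt smax - r)^2"
      using VJ_gap_le_quad[of E r] VJ_eq_kinetic[OF s(1-4) factor r_pos] assms(1) r_pos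
      unfolding K_def by simp
  qed
  have "(ln (sqrt smax - sqrt smid) - ln (sqrt smax - t)) / sqrt quad_coeff
      \<le> integral {sqrt smid..t} (\<lambda>r. 1 / sqrt (K r))"
    using sub K_le t(1) less_trans[OF t(2,3)] quad_coeff_pos
    by (intro integral_inv_sqrt_ge_ln integrable_on_subinterval[OF integrable]) auto
  also have "\<dots> \<le> integral {sqrt s1..sqrt s2} (\<lambda>r. 1 / sqrt (K r))"
    using sub s kinetic_nonneg[of "- b" s1 s2 s3] unfolding K_def
    by (intro integral_subset_le integrable_on_subinterval[OF integrable[unfolded K_def]]) auto
  finally have "(ln (sqrt smax - sqrt smid) - ln (sqrt smax - t)) / sqrt quad_coeff
      \<le> integral {sqrt s1..sqrt s2} (\<lambda>r. 1 / sqrt (K r))" .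
  moreover have "sqrt smax - t = 2 * (sqrt smax - sqrt s2)"
    unfolding t_def by simp
  ultimately have "(ln (sqrt smax - sqrt smid) - ln (2 * (sqrt smax - sqrt s2))) / sqrt quad_coeff
      \<le> integral {sqrt s1..sqrt s2} (\<lambda>r. 1 / sqrt (K r))"
    by (simp only:)
  then show ?thesis
    unfolding T_eq_kinetic_integral[OF s(1-4) factor] K_def[symmetric]
      times_divide_eq_right[symmetric]
    by linarith
qed

lemma eventually_T_ge_ln:
  "\<forall>\<^sub>F E in at_left Ep.
     2 * (ln (sqrt smax - sqrt smid) - ln (2 * (sqrt smax - r2 a b J E))) / sqrt quad_coeff \<le> T a b J E"
proof -
  have "((\<lambda>E. sqrt smax - r2 a b J E) \<longlongrightarrow> 0) (at_left Ep)"
    using sqrt_smax_minus_r2_tendsto by (simp add: filterlim_at)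
  then have "\<forall>\<^sub>F E in at_left Ep. sqrt smax - r2 a b J E < (sqrt smax - sqrt smid) / 2"
    by (rule order_tendstoD) (use smid_bounds in simp)
  moreover have "\<forall>\<^sub>F E in at_left Ep. E < Ep"
    by (simp add: eventually_at_filter)
  ultimately show ?thesis
    using eventually_radial_cubic_factor
  proof eventually_elim
    case (elim E)
    then obtain s1 s2 s3 where s: "0 < s1" "s1 < smid" "smid < s2" "s2 < smax" "smax < s3"
      and factor: "\<And>s. radial_cubic a b J E s = - b * (s - s1) * (s - s2) * (s - s3)"
      by blast
    have "r2 a b J E = sqrt s2"
      using b_neg s by (intro r2_eq_sqrt_root[OF _ _ _ _ factor]) auto
    then show ?case
      using T_ge_ln_of_factor[OF \<open>E < Ep\<close> s factor] elim(1) by simp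
  qed
qed

lemma T_tendsto_at_top: "filterlim (T a b J) at_top (at_left Ep)"
proof -
  define c where "c = 2 * ln (sqrt smax - sqrt smid) / sqrt quad_coeff"
  define k where "k = 2 / sqrt quad_coeff"
  have "((\<lambda>E. 2 * (sqrt smax - r2 a b J E)) \<longlongrightarrow> 2 * 0) (at_left Ep)"
    using sqrt_smax_minus_r2_tendsto by (intro tendsto_mult tendsto_const) (simp add: filterlim_at)
  moreover have "\<forall>\<^sub>F E in at_left Ep. 0 < 2 * (sqrt smax - r2 a b J E)"
    using eventually_r2_bounds by eventually_elim simp
  ultimately have "filterlim (\<lambda>E. 2 * (sqrt smax - r2 a b J E)) (at_right 0) (at_left Ep)"
    by (intro tendsto_imp_filterlim_at_right) simp_all
  then have "filterlim (\<lambda>E. - ln (2 * (sqrt smax - r2 a b J E))) at_top (at_left Ep)"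
    by (rule filterlim_compose[OF filterlim_uminus_at_top_at_bot filterlim_compose[OF ln_at_0]])
  then have "filterlim (\<lambda>E. c + k * - ln (2 * (sqrt smax - r2 a b J E))) at_top (at_left Ep)"
    using quad_coeff_pos unfolding k_def
    by (intro filterlim_tendsto_add_at_top[OF tendsto_const]
        filterlim_tendsto_pos_mult_at_top[OF tendsto_const]) simp_all
  moreover have "c + k * - ln (2 * (sqrt smax - r2 a b J E))
      = 2 * (ln (sqrt smax - sqrt smid) - ln (2 * (sqrt smax - r2 a b J E))) / sqrt quad_coeff" for E
    unfolding c_def k_def by (simp add: diff_divide_distrib right_diff_distrib)
  ultimately show ?thesis
    using eventually_T_ge_ln by (auto intro: filterlim_at_top_mono)
qed

lemma eventually_T_pos: "\<forall>\<^sub>F E in at_left Ep. 0 < T a b J E"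
  using T_tendsto_at_top unfolding filterlim_at_top_dense by blast

lemma eventually_defect_le:
  assumes "0 < \<epsilon>"
  shows "\<exists>C. \<forall>\<^sub>F E in at_left Ep. \<bar>smax / 2 * T a b J E - Mt a b J E\<bar> \<le> \<epsilon> * T a b J E + C"
proof
  have "\<forall>\<^sub>F E in at_left Ep. smax - \<epsilon> < (r2 a b J E)^2"
    using r2_sq_tendsto by (rule order_tendstoD) (use assms in simp)
  then show "\<forall>\<^sub>F E in at_left Ep. \<bar>smax / 2 * T a b J E - Mt a b J E\<bar>
      \<le> \<epsilon> * T a b J E + smax * sqrt (8 * smax / - b) / (2 * \<epsilon>)"
    using eventually_radial_cubic_factor
  proof eventually_elim
    case (elim E)
    then obtain s1 s2 s3 where s: "0 < s1" "s1 < smid" "smid < s2" "s2 < smax" "smax < s3"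
      and factor: "\<And>s. radial_cubic a b J E s = - b * (s - s1) * (s - s2) * (s - s3)"
      by blast
    have s': "b \<noteq> 0" "0 < s1" "s1 < s2" "s2 < s3" "0 < - b"
      using s b_neg by auto
    have "r2 a b J E = sqrt s2"
      by (rule r2_eq_sqrt_root[OF s'(1-4) factor])
    then have "smax - s2 \<le> 2 * \<epsilon> / 2"
      using elim(1) s' by simp
    then show ?case
      using kinetic_defect_integral_bounds[of "- b" s1 s2 smax s3 "2 * \<epsilon>"] s' s assms
      unfolding half_T_minus_Mt_eq_integral[OF b_neg s'(2-4) factor]
      unfolding T_eq_kinetic_integral[OF s'(1-4) factor]
      by auto
  qed
qed

lemma Mt_div_T_tendsto: "((\<lambda>E. Mt a b J E / T a b J E) \<longlongrightarrow> smax / 2) (at_left Ep)"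
proof -
  have "((\<lambda>E. (smax / 2 * T a b J E - Mt a b J E) / T a b J E) \<longlongrightarrow> 0) (at_left Ep)"
    by (rule tendsto_divide_at_top_zero[OF T_tendsto_at_top eventually_defect_le])
  then have "((\<lambda>E. smax / 2 - (smax / 2 * T a b J E - Mt a b J E) / T a b J E) \<longlongrightarrow> smax / 2 - 0)
      (at_left Ep)"
    by (intro tendsto_diff tendsto_const)
  moreover have "\<forall>\<^sub>F E in at_left Ep.
      smax / 2 - (smax / 2 * T a b J E - Mt a b J E) / T a b J E = Mt a b J E / T a b J E"
    using eventually_T_pos by eventually_elim (simp add: field_simps)
  ultimately show ?thesis
    by (simp add: Lim_transform_eventually)
qed

lemma Mt_tendsto_at_top: "filterlim (Mt a b J) at_top (at_left Ep)"
proof -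
  have "filterlim (\<lambda>E. Mt a b J E / T a b J E * T a b J E) at_top (at_left Ep)"
    using smax_pos
    by (intro filterlim_tendsto_pos_mult_at_top[OF Mt_div_T_tendsto _ T_tendsto_at_top]) simp
  moreover have "\<forall>\<^sub>F E in at_left Ep. Mt a b J E / T a b J E * T a b J E = Mt a b J E"
    using eventually_T_pos by eventually_elim simp
  ultimately show ?thesis
    using filterlim_cong by fastforce
qed

lemma Pt_tendsto_at_top: "filterlim (Pt a b J) at_top (at_left Ep)"
proof -
  have "filterlim (\<lambda>E. J / 2 * T a b J E) at_top (at_left Ep)"
    using J_pos
    by (intro filterlim_tendsto_pos_mult_at_top[OF tendsto_const _ T_tendsto_at_top]) simp
  then show ?thesis
    by (simp add: Pt_def[abs_def] mult.commute)
qed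

lemma Pt_div_T_tendsto: "((\<lambda>E. Pt a b J E / T a b J E) \<longlongrightarrow> J / 2) (at_left Ep)"
proof -
  have "\<forall>\<^sub>F E in at_left Ep. J / 2 = Pt a b J E / T a b J E"
    using eventually_T_pos by eventually_elim (simp add: Pt_def)
  then show ?thesis
    by (rule Lim_transform_eventually[OF tendsto_const])
qed

end

theorem proposition3:
  fixes a b J E q :: real
  assumes "b < 0" and "0 < a"
    and "(J, E) \<in> D1 a b"
    and "0 < q" and "q < sqrt (a / 3)" and "J = q * (q^2 - a) / b"
  shows "filterlim (\<lambda>E. T a b J E) at_top (at (Eplus a b J) within {E. (J, E) \<in> D1 a b}) \<and>
         filterlim (\<lambda>E. Mt a b J E) at_top (at (Eplus a b J) within {E. (J, E) \<in> D1 a b}) \<and>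
         ((\<lambda>E. Mt a b J E / T a b J E) \<longlongrightarrow> (q^2 - a) / (2 * b))
           (at (Eplus a b J) within {E. (J, E) \<in> D1 a b}) \<and>
         filterlim (\<lambda>E. Pt a b J E) at_top (at (Eplus a b J) within {E. (J, E) \<in> D1 a b}) \<and>
         ((\<lambda>E. Pt a b J E / T a b J E) \<longlongrightarrow> q * (q^2 - a) / (2 * b))
           (at (Eplus a b J) within {E. (J, E) \<in> D1 a b})"
proof -
  have "q^2 < sqrt (a / 3) ^ 2"
    using assms(4,5) by (intro power_strict_mono) auto
  then interpret separatrix a b q J
    using assms by unfold_locales simp_all
  have F: "at Ep within {E. (J, E) \<in> D1 a b} \<le> at_left Ep"
    unfolding D1_def by (intro at_le) auto
  have limits: "smax / 2 = (q^2 - a) / (2 * b)" "J / 2 = q * (q^2 - a) / (2 * b)"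
    by (simp_all add: smax_def assms(6))
  show ?thesis
    using filterlim_mono[OF T_tendsto_at_top order_refl F]
      filterlim_mono[OF Mt_tendsto_at_top order_refl F] filterlim_mono[OF Pt_tendsto_at_top order_refl F]
      tendsto_mono[OF F Mt_div_T_tendsto] tendsto_mono[OF F Pt_div_T_tendsto]
    unfolding limits by simp
qed

end
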